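(* There is a constant $A$ such that, for all sufficiently large $n$, every big irreducible representation $\lambda$ of $S_n$ and every $\pi\in S_n$ with $t(\pi) > \sqrt{n}\log n$ obey $\left|\chi_\lambda(\pi)/d_\lambda\right| \le A^{t(\pi)} n^{-t(\pi)/2}$.
   Context: An irreducible representation $\lambda$ of $S_n$ with character $\chi_\lambda$ and dimension $d_\lambda$ is big if $d_\lambda > e^{-\sqrt{n}\log n}\sqrt{n!}$ (natural logarithm). For $\pi\in S_n$, $t(\pi)$ is the minimum number of transpositions whose product is $\pi$. *)

theory Defs
  imports Complex_Main "HOL-Combinatorics.Combinatorics" "Jordan_Normal_Form.Matrix"
begin

definition mat_trace :: "complex mat \<Rightarrow> complex" where
  "mat_trace M = (\<Sum>i<dim_row M. M $$ (i, i))"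

definition is_rep :: "nat \<Rightarrow> nat \<Rightarrow> ((nat \<Rightarrow> nat) \<Rightarrow> complex mat) \<Rightarrow> bool" where
  "is_rep n d \<rho> \<longleftrightarrow>
     (\<forall>\<sigma>. \<sigma> permutes {..<n} \<longrightarrow> \<rho> \<sigma> \<in> carrier_mat d d) \<and>
     \<rho> id = 1\<^sub>m d \<and>
     (\<forall>\<sigma> \<tau>. \<sigma> permutes {..<n} \<longrightarrow> \<tau> permutes {..<n} \<longrightarrow> \<rho> (\<sigma> \<circ> \<tau>) = \<rho> \<sigma> * \<rho> \<tau>)"

definition invariant_subspace :: "nat \<Rightarrow> nat \<Rightarrow> ((nat \<Rightarrow> nat) \<Rightarrow> complex mat) \<Rightarrow> complex vec set \<Rightarrow> bool" where
  "invariant_subspace n d \<rho> W \<longleftrightarrow>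
     W \<subseteq> carrier_vec d \<and> 0\<^sub>v d \<in> W \<and>
     (\<forall>v\<in>W. \<forall>w\<in>W. v + w \<in> W) \<and>
     (\<forall>c. \<forall>v\<in>W. c \<cdot>\<^sub>v v \<in> W) \<and>
     (\<forall>\<sigma> v. \<sigma> permutes {..<n} \<longrightarrow> v \<in> W \<longrightarrow> \<rho> \<sigma> *\<^sub>v v \<in> W)"

definition irreducible_rep :: "nat \<Rightarrow> nat \<Rightarrow> ((nat \<Rightarrow> nat) \<Rightarrow> complex mat) \<Rightarrow> bool" where
  "irreducible_rep n d \<rho> \<longleftrightarrow> is_rep n d \<rho> \<and> d > 0 \<and>
     (\<forall>W. invariant_subspace n d \<rho> W \<longrightarrow> W = {0\<^sub>v d} \<or> W = carrier_vec d)"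

definition big :: "nat \<Rightarrow> nat \<Rightarrow> bool" where
  "big n d \<longleftrightarrow> real d > exp (- sqrt (real n) * ln (real n)) * sqrt (fact n)"

definition tmin :: "nat \<Rightarrow> (nat \<Rightarrow> nat) \<Rightarrow> nat" where
  "tmin n \<pi> = (LEAST k. \<exists>ts :: (nat \<times> nat) list. length ts = k \<and>
       (\<forall>(a, b) \<in> set ts. a < n \<and> b < n \<and> a \<noteq> b) \<and>
       foldr (\<lambda>(a, b) f. Transposition.transpose a b \<circ> f) ts id = \<pi>)"

end

theory Submission
  imports Defs "Jordan_Normal_Form.Schur_Decomposition"
begin

text \<open>
  By Schur orthogonality the squared norms of the character values of an irreducible
  representation sum to n!, and the character is constant on the conjugacy class of \<pi>, which has
  n!/|C(\<pi>)| elements; hence |\<chi>(\<pi>)|^2 \<le> |C(\<pi>)| for the centraliser C(\<pi>).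
  If \<pi> moves m points and R contains a point of each of its nontrivial cycles, then
  |C(\<pi>)| \<le> (n - m)! m^|R| and t + |R| \<le> m \<le> 2t for t = t(\<pi>), so that
  n^t |C(\<pi>)| \<le> n^m (n - m)! \<le> e^(2m) n! \<le> e^(4t) n!.
  Bigness of d together with t > sqrt n log n gives n! \<le> e^(2t) d^2.  Altogether
  |\<chi>(\<pi>)/d|^2 \<le> e^(6t) n^(-t), which is the claim with A = e^3.
\<close>

(* Jordan_Normal_Form imports HOL-Algebra, whose group-inverse syntax would capture inv. *)
unbundle no m_inv_syntax

section \<open>Traces of complex matrices\<close>

lemma index_mult_mat_sum:
  assumes "A \<in> carrier_mat m k" "B \<in> carrier_mat k l" "i < m" "j < l"
  shows "(A * B) $$ (i, j) = (\<Sum>r<k. A $$ (i, r) * B $$ (r, j))"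
  using assms by (simp add: scalar_prod_def atLeast0LessThan)

lemma mat_trace_mult_comm:
  assumes A: "A \<in> carrier_mat m k" and B: "B \<in> carrier_mat k m"
  shows "mat_trace (A * B) = mat_trace (B * A)"
proof -
  have "mat_trace (A * B) = (\<Sum>i<m. \<Sum>r<k. A $$ (i, r) * B $$ (r, i))"
    unfolding mat_trace_def using A by (simp add: index_mult_mat_sum[OF A B])
  also have "\<dots> = (\<Sum>r<k. \<Sum>i<m. B $$ (r, i) * A $$ (i, r))"
    by (subst sum.swap) (simp add: mult.commute)
  also have "\<dots> = mat_trace (B * A)"
    unfolding mat_trace_def using B by (simp add: index_mult_mat_sum[OF B A])
  finally show ?thesis .
qed

lemma mat_trace_similar_mat_wit:
  assumes "similar_mat_wit A B P Q"
  shows "mat_trace A = mat_trace B"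
proof -
  obtain n where A: "A \<in> carrier_mat n n" and B: "B \<in> carrier_mat n n"
    and P: "P \<in> carrier_mat n n" and Q: "Q \<in> carrier_mat n n"
    and QP: "Q * P = 1\<^sub>m n" and APBQ: "A = P * B * Q"
    using assms unfolding similar_mat_wit_def Let_def by blast
  have "mat_trace (P * B * Q) = mat_trace (Q * (P * B))"
    using P B Q by (intro mat_trace_mult_comm) auto
  also have "Q * (P * B) = B"
    using P B Q QP by (simp add: assoc_mult_mat[symmetric, of Q n n P n B n])
  finally show ?thesis using APBQ by simp
qed

lemma upper_triangular_mult:
  assumes A: "A \<in> carrier_mat n n" and B: "B \<in> carrier_mat n n"
    and "upper_triangular A" "upper_triangular B"
  shows "upper_triangular (A * B)"
    and "i < n \<Longrightarrow> (A * B) $$ (i, i) = A $$ (i, i) * B $$ (i, i)"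
proof -
  have vanish: "A $$ (i, r) * B $$ (r, j) = 0" if "i < n" "r < n" "j < n" "r < i \<or> j < r" for i r j
    using assms that by (auto simp: upper_triangularD)
  show "upper_triangular (A * B)"
  proof
    fix i j assume ij: "j < i" "i < dim_row (A * B)"
    then have "(A * B) $$ (i, j) = (\<Sum>r<n. A $$ (i, r) * B $$ (r, j))"
      using A ij by (intro index_mult_mat_sum[OF A B]) auto
    also have "\<dots> = 0"
      using A ij by (intro sum.neutral ballI vanish) auto
    finally show "(A * B) $$ (i, j) = 0" .
  qed
  assume i: "i < n"
  have "(A * B) $$ (i, i) = (\<Sum>r<n. A $$ (i, r) * B $$ (r, i))"
    using i by (intro index_mult_mat_sum[OF A B])
  also have "\<dots> = A $$ (i, i) * B $$ (i, i) + (\<Sum>r\<in>{..<n} - {i}. A $$ (i, r) * B $$ (r, i))"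
    using i by (subst sum.remove[of _ i]) auto
  also have "(\<Sum>r\<in>{..<n} - {i}. A $$ (i, r) * B $$ (r, i)) = 0"
    using i by (intro sum.neutral ballI vanish) auto
  finally show "(A * B) $$ (i, i) = A $$ (i, i) * B $$ (i, i)" by simp
qed

lemma upper_triangular_pow:
  assumes B: "B \<in> carrier_mat n n" and "upper_triangular B"
  shows "upper_triangular (B ^\<^sub>m k) \<and> (\<forall>i<n. (B ^\<^sub>m k) $$ (i, i) = B $$ (i, i) ^ k)"
proof (induction k)
  case (Suc k)
  have "B ^\<^sub>m k \<in> carrier_mat n n" using B by simp
  then show ?case
    using upper_triangular_mult[of "B ^\<^sub>m k" n B] Suc assms by (auto simp del: power_Suc simp: power_Suc2)
qed (use B in auto)

lemma root_of_unity_pow_pred: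
  fixes z :: complex
  assumes "z ^ k = 1" "k > 0"
  shows "z ^ (k - 1) = cnj z"
proof -
  have "cmod z = 1" using power_eq_1_iff[OF assms(1)] assms(2) by simp
  then have "cnj z * z = 1" using complex_norm_square[of z] by (simp add: mult.commute)
  moreover have "z ^ (k - 1) * z = 1"
    using assms by (simp add: power_Suc2[symmetric])
  ultimately show ?thesis by (metis mult.commute mult_cancel_left mult_zero_left zero_neq_one)
qed

text \<open>The eigenvalues of a matrix of finite order are roots of unity, so raising it to
  the power k - 1 conjugates them; triangularise to see them on the diagonal.\<close>
lemma mat_trace_finite_order_pow_pred:
  fixes M :: "complex mat"
  assumes M: "M \<in> carrier_mat n n" and Mk: "M ^\<^sub>m k = 1\<^sub>m n" and k: "k > 0"
  shows "mat_trace (M ^\<^sub>m (k - 1)) = cnj (mat_trace M)"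
proof -
  obtain es where "char_poly M = (\<Prod>a\<leftarrow>es. [:- a, 1:])"
    using char_poly_factorized[OF M] by blast
  moreover obtain B P Q where "schur_decomposition M es = (B, P, Q)"
    by (cases "schur_decomposition M es") auto
  ultimately have sim: "similar_mat_wit M B P Q" and ut: "upper_triangular B"
    using schur_decomposition[OF M] by auto
  have B: "B \<in> carrier_mat n n" and P: "P \<in> carrier_mat n n" and Q: "Q \<in> carrier_mat n n"
    and QP: "Q * P = 1\<^sub>m n"
    using similar_mat_witD2[OF M sim] by auto
  have "B ^\<^sub>m k = 1\<^sub>m n"
    using similar_mat_wit_pow_id[OF similar_mat_wit_sym[OF sim], of k] Mk P Q QP by simp
  then have unit: "B $$ (i, i) ^ k = 1" if "i < n" for i
    using upper_triangular_pow[OF B ut, of k] that by auto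
  have "mat_trace (M ^\<^sub>m (k - 1)) = mat_trace (B ^\<^sub>m (k - 1))"
    using similar_mat_wit_pow[OF sim] by (intro mat_trace_similar_mat_wit) auto
  also have "\<dots> = (\<Sum>i<n. cnj (B $$ (i, i)))"
    unfolding mat_trace_def using B upper_triangular_pow[OF B ut, of "k - 1"]
      root_of_unity_pow_pred[OF unit k] by auto
  also have "\<dots> = cnj (mat_trace M)"
    using mat_trace_similar_mat_wit[OF sim] M B unfolding mat_trace_def by simp
  finally show ?thesis .
qed

section \<open>Characters of representations of S_n\<close>

abbreviation perms :: "nat \<Rightarrow> (nat \<Rightarrow> nat) set" where
  "perms n \<equiv> {\<sigma>. \<sigma> permutes {..<n}}"

text \<open>The sum over g of \<rho>(g) E \<rho>(inv g) for the matrix unit E with single entry at (i, k).\<close>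
definition rep_average ::
    "nat \<Rightarrow> nat \<Rightarrow> ((nat \<Rightarrow> nat) \<Rightarrow> complex mat) \<Rightarrow> nat \<Rightarrow> nat \<Rightarrow> complex mat" where
  "rep_average n d \<rho> i k =
    mat d d (\<lambda>(a, b). \<Sum>g\<in>perms n. \<rho> g $$ (a, i) * \<rho> (inv g) $$ (k, b))"

context
  fixes n d :: nat and \<rho> :: "(nat \<Rightarrow> nat) \<Rightarrow> complex mat"
  assumes rep: "is_rep n d \<rho>"
begin

lemma rep_carrier: "\<sigma> permutes {..<n} \<Longrightarrow> \<rho> \<sigma> \<in> carrier_mat d d"
  using rep unfolding is_rep_def by blast

lemma rep_comp: "\<sigma> permutes {..<n} \<Longrightarrow> \<tau> permutes {..<n} \<Longrightarrow> \<rho> (\<sigma> \<circ> \<tau>) = \<rho> \<sigma> * \<rho> \<tau>"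
  using rep unfolding is_rep_def by blast

lemma rep_id: "\<rho> id = 1\<^sub>m d"
  using rep unfolding is_rep_def by blast

lemma rep_comp_entry:
  assumes "\<sigma> permutes {..<n}" "\<tau> permutes {..<n}" "a < d" "b < d"
  shows "\<rho> (\<sigma> \<circ> \<tau>) $$ (a, b) = (\<Sum>j<d. \<rho> \<sigma> $$ (a, j) * \<rho> \<tau> $$ (j, b))"
  using assms by (simp add: rep_comp index_mult_mat_sum[OF rep_carrier rep_carrier] del: index_mult_mat)

lemma rep_inv:
  assumes "\<sigma> permutes {..<n}"
  shows "\<rho> \<sigma> * \<rho> (inv \<sigma>) = 1\<^sub>m d" and "\<rho> (inv \<sigma>) * \<rho> \<sigma> = 1\<^sub>m d"
  using rep_comp[OF assms permutes_inv[OF assms]] rep_comp[OF permutes_inv[OF assms] assms]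
  by (simp_all add: permutes_inv_o[OF assms] rep_id)

lemma rep_funpow:
  assumes "\<sigma> permutes {..<n}"
  shows "\<rho> (\<sigma> ^^ k) = \<rho> \<sigma> ^\<^sub>m k"
proof (induction k)
  case 0
  show ?case using rep_carrier[OF assms] by (simp add: id_def[symmetric] rep_id)
next
  case (Suc k)
  have "\<rho> (\<sigma> ^^ Suc k) = \<rho> (\<sigma> ^^ k) * \<rho> \<sigma>"
    unfolding funpow_Suc_right using assms by (intro rep_comp permutes_funpow)
  then show ?case using Suc.IH by (simp only: pow_mat.simps)
qed

lemma character_conj:
  assumes \<sigma>: "\<sigma> permutes {..<n}" and \<pi>: "\<pi> permutes {..<n}"
  shows "mat_trace (\<rho> (\<sigma> \<circ> \<pi> \<circ> inv \<sigma>)) = mat_trace (\<rho> \<pi>)"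
proof -
  have \<sigma>': "inv \<sigma> permutes {..<n}" using \<sigma> by (rule permutes_inv)
  note carriers = rep_carrier[OF \<sigma>] rep_carrier[OF \<pi>] rep_carrier[OF \<sigma>']
  have "mat_trace (\<rho> (\<sigma> \<circ> \<pi> \<circ> inv \<sigma>)) = mat_trace (\<rho> \<sigma> * (\<rho> \<pi> * \<rho> (inv \<sigma>)))"
    using \<sigma> \<pi> \<sigma>' by (simp add: rep_comp permutes_compose comp_assoc)
  also have "\<dots> = mat_trace ((\<rho> \<pi> * \<rho> (inv \<sigma>)) * \<rho> \<sigma>)"
    using carriers by (intro mat_trace_mult_comm[of _ d d]) auto
  also have "\<dots> = mat_trace (\<rho> \<pi>)"
    using carriers by (simp add: rep_inv[OF \<sigma>] assoc_mult_mat[of _ d d _ d _ d])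
  finally show ?thesis .
qed

lemma character_inv:
  assumes \<sigma>: "\<sigma> permutes {..<n}"
  shows "mat_trace (\<rho> (inv \<sigma>)) = cnj (mat_trace (\<rho> \<sigma>))"
proof -
  obtain k where k: "\<sigma> ^^ k = id" "k > 0"
    using permutation_is_nilpotent \<sigma> permutation_permutes by blast
  note carriers = rep_carrier[OF \<sigma>] rep_carrier[OF permutes_inv[OF \<sigma>]]
  have order: "\<rho> \<sigma> ^\<^sub>m k = 1\<^sub>m d"
    using k by (simp add: rep_funpow[OF \<sigma>, symmetric] rep_id)
  have "\<rho> \<sigma> ^\<^sub>m (k - 1) = \<rho> \<sigma> ^\<^sub>m (k - 1) * (\<rho> \<sigma> * \<rho> (inv \<sigma>))"
    using carriers by (simp add: rep_inv[OF \<sigma>])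
  also have "\<dots> = \<rho> \<sigma> ^\<^sub>m k * \<rho> (inv \<sigma>)"
    using carriers k(2) by (cases k) (simp_all add: assoc_mult_mat[of _ d d _ d _ d])
  finally have "\<rho> (inv \<sigma>) = \<rho> \<sigma> ^\<^sub>m (k - 1)"
    using carriers order by simp
  then show ?thesis
    using mat_trace_finite_order_pow_pred[OF rep_carrier[OF \<sigma>] order k(2)] by simp
qed

lemma rep_average_commute:
  assumes h: "h permutes {..<n}" and i: "i < d" and k: "k < d"
  shows "\<rho> h * rep_average n d \<rho> i k = rep_average n d \<rho> i k * \<rho> h"
proof (rule eq_matI)
  let ?T = "rep_average n d \<rho> i k"
  have T: "?T \<in> carrier_mat d d" and H: "\<rho> h \<in> carrier_mat d d"
    unfolding rep_average_def using rep_carrier[OF h] by auto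
  fix a b assume "a < dim_row (?T * \<rho> h)" "b < dim_col (?T * \<rho> h)"
  then have a: "a < d" and b: "b < d" using T H by auto
  have "(\<rho> h * ?T) $$ (a, b)
      = (\<Sum>j<d. \<rho> h $$ (a, j) * (\<Sum>g\<in>perms n. \<rho> g $$ (j, i) * \<rho> (inv g) $$ (k, b)))"
    using a b by (subst index_mult_mat_sum[OF H T]) (auto simp: rep_average_def)
  also have "\<dots> = (\<Sum>g\<in>perms n. (\<Sum>j<d. \<rho> h $$ (a, j) * \<rho> g $$ (j, i)) * \<rho> (inv g) $$ (k, b))"
    by (simp add: sum_distrib_left sum_distrib_right mult.assoc sum.swap[of _ "{..<d}"])
  also have "\<dots> = (\<Sum>g\<in>perms n. \<rho> (h \<circ> g) $$ (a, i) * \<rho> (inv g) $$ (k, b))"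
    using a i h by (intro sum.cong) (auto simp: rep_comp_entry)
  also have "\<dots> = (\<Sum>g\<in>perms n. \<rho> g $$ (a, i) * \<rho> (inv g \<circ> h) $$ (k, b))"
  proof -
    have "inv (h \<circ> g) \<circ> h = inv g" if "g permutes {..<n}" for g
      using h that by (simp add: o_inv_distrib permutes_bij comp_assoc permutes_inv_o)
    then show ?thesis
      using setum_permutations_compose_left[OF h,
          of "\<lambda>g. \<rho> g $$ (a, i) * \<rho> (inv g \<circ> h) $$ (k, b)"]
      by simp
  qed
  also have "\<dots> = (\<Sum>g\<in>perms n. \<rho> g $$ (a, i) * (\<Sum>j<d. \<rho> (inv g) $$ (k, j) * \<rho> h $$ (j, b)))"
    using b k h by (intro sum.cong) (auto simp: rep_comp_entry permutes_inv)
  also have "\<dots> = (?T * \<rho> h) $$ (a, b)"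
    using a b by (subst index_mult_mat_sum[OF T H])
      (auto simp: rep_average_def sum_distrib_left sum_distrib_right mult.assoc sum.swap[of _ "{..<d}"])
  finally show "(\<rho> h * ?T) $$ (a, b) = (?T * \<rho> h) $$ (a, b)" .
qed (use rep_carrier[OF h] in \<open>auto simp: rep_average_def\<close>)

lemma mat_trace_rep_average:
  assumes i: "i < d" and k: "k < d"
  shows "mat_trace (rep_average n d \<rho> i k) = (if k = i then fact n else 0)"
proof -
  have "mat_trace (rep_average n d \<rho> i k)
      = (\<Sum>g\<in>perms n. \<Sum>a<d. \<rho> (inv g) $$ (k, a) * \<rho> g $$ (a, i))"
    unfolding mat_trace_def rep_average_def by (simp add: sum.swap[of _ "{..<d}"] mult.commute)
  also have "\<dots> = (\<Sum>g\<in>perms n. \<rho> (inv g \<circ> g) $$ (k, i))"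
    using i k by (intro sum.cong) (auto simp: rep_comp_entry permutes_inv)
  also have "\<dots> = (\<Sum>g\<in>perms n. 1\<^sub>m d $$ (k, i))"
    by (intro sum.cong) (auto simp: permutes_inv_o rep_id)
  finally show ?thesis using i k by (simp add: card_permutations)
qed

end

context
  fixes n d :: nat and \<rho> :: "(nat \<Rightarrow> nat) \<Rightarrow> complex mat"
  assumes irr: "irreducible_rep n d \<rho>"
begin

lemma irr_rep: "is_rep n d \<rho>" and irr_dim_pos: "d > 0"
  using irr unfolding irreducible_rep_def by auto

lemma irr_invariant_subspace:
  "invariant_subspace n d \<rho> W \<Longrightarrow> W = {0\<^sub>v d} \<or> W = carrier_vec d"
  using irr unfolding irreducible_rep_def by blast

lemma eigenspace_invariant_subspace:
  assumes T: "T \<in> carrier_mat d d"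
    and comm: "\<And>\<sigma>. \<sigma> permutes {..<n} \<Longrightarrow> \<rho> \<sigma> * T = T * \<rho> \<sigma>"
  shows "invariant_subspace n d \<rho> {v \<in> carrier_vec d. T *\<^sub>v v = c \<cdot>\<^sub>v v}"
  unfolding invariant_subspace_def
proof (intro conjI ballI allI impI)
  fix v w
  assume "v \<in> {v \<in> carrier_vec d. T *\<^sub>v v = c \<cdot>\<^sub>v v}" "w \<in> {v \<in> carrier_vec d. T *\<^sub>v v = c \<cdot>\<^sub>v v}"
  then show "v + w \<in> {v \<in> carrier_vec d. T *\<^sub>v v = c \<cdot>\<^sub>v v}"
    using T by (auto simp: mult_add_distrib_mat_vec smult_add_distrib_vec)
next
  fix a v assume v: "v \<in> {v \<in> carrier_vec d. T *\<^sub>v v = c \<cdot>\<^sub>v v}"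
  then have "T *\<^sub>v (a \<cdot>\<^sub>v v) = a \<cdot>\<^sub>v (c \<cdot>\<^sub>v v)"
    using T by (simp add: mult_mat_vec)
  also have "\<dots> = c \<cdot>\<^sub>v (a \<cdot>\<^sub>v v)"
    by (simp add: smult_smult_assoc mult.commute[of a c])
  finally show "a \<cdot>\<^sub>v v \<in> {v \<in> carrier_vec d. T *\<^sub>v v = c \<cdot>\<^sub>v v}"
    using v by simp
next
  fix \<sigma> v
  assume \<sigma>: "\<sigma> permutes {..<n}" and v: "v \<in> {v \<in> carrier_vec d. T *\<^sub>v v = c \<cdot>\<^sub>v v}"
  have R: "\<rho> \<sigma> \<in> carrier_mat d d" using rep_carrier[OF irr_rep \<sigma>] .
  have "T *\<^sub>v (\<rho> \<sigma> *\<^sub>v v) = (T * \<rho> \<sigma>) *\<^sub>v v"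
    using T R v by simp
  also have "\<dots> = \<rho> \<sigma> *\<^sub>v (T *\<^sub>v v)"
    using T R v by (simp add: comm[OF \<sigma>, symmetric])
  also have "\<dots> = c \<cdot>\<^sub>v (\<rho> \<sigma> *\<^sub>v v)"
    using R v by (simp add: mult_mat_vec)
  finally show "\<rho> \<sigma> *\<^sub>v v \<in> {v \<in> carrier_vec d. T *\<^sub>v v = c \<cdot>\<^sub>v v}"
    using R v by simp
qed (use T in auto)

lemma schur_lemma:
  assumes T: "T \<in> carrier_mat d d"
    and comm: "\<And>\<sigma>. \<sigma> permutes {..<n} \<Longrightarrow> \<rho> \<sigma> * T = T * \<rho> \<sigma>"
  shows "\<exists>c. T = c \<cdot>\<^sub>m 1\<^sub>m d"
proof -
  obtain es where es: "char_poly T = (\<Prod>a\<leftarrow>es. [:- a, 1:])" "length es = d"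
    using char_poly_factorized[OF T] by blast
  have "poly (char_poly T) (es ! 0) = 0"
    unfolding es(1) using es(2) irr_dim_pos by (auto simp: poly_prod_list)
  then obtain v where v: "v \<in> carrier_vec d" "v \<noteq> 0\<^sub>v d" "T *\<^sub>v v = es ! 0 \<cdot>\<^sub>v v"
    using eigenvalue_root_char_poly[OF T] T unfolding eigenvalue_def eigenvector_def by auto
  let ?E = "{v \<in> carrier_vec d. T *\<^sub>v v = es ! 0 \<cdot>\<^sub>v v}"
  have "?E \<noteq> {0\<^sub>v d}"
    using v by blast
  then have E: "?E = carrier_vec d"
    using irr_invariant_subspace[OF eigenspace_invariant_subspace[OF T comm]] by blast
  have eigen: "T *\<^sub>v unit_vec d j = es ! 0 \<cdot>\<^sub>v unit_vec d j" if "j < d" for j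
  proof -
    have "unit_vec d j \<in> ?E"
      unfolding E by simp
    then show ?thesis by blast
  qed
  have "T = es ! 0 \<cdot>\<^sub>m 1\<^sub>m d"
  proof (rule eq_matI)
    fix i j assume "i < dim_row (es ! 0 \<cdot>\<^sub>m 1\<^sub>m d)" "j < dim_col (es ! 0 \<cdot>\<^sub>m 1\<^sub>m d)"
    then have i: "i < d" and j: "j < d" by auto
    have "T $$ (i, j) = (T *\<^sub>v unit_vec d j) $ i"
      using T i j by simp
    also have "\<dots> = (es ! 0 \<cdot>\<^sub>m 1\<^sub>m d) $$ (i, j)"
      unfolding eigen[OF j] using i j by (simp add: unit_vec_def)
    finally show "T $$ (i, j) = (es ! 0 \<cdot>\<^sub>m 1\<^sub>m d) $$ (i, j)" .
  qed (use T in auto)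
  then show ?thesis by blast
qed

lemma schur_orthogonality:
  assumes i: "i < d" and k: "k < d"
  shows "(\<Sum>g\<in>perms n. \<rho> g $$ (i, i) * \<rho> (inv g) $$ (k, k))
    = (if i = k then fact n / of_nat d else 0)"
proof -
  let ?T = "rep_average n d \<rho> i k"
  have "?T \<in> carrier_mat d d"
    unfolding rep_average_def by simp
  then obtain c where c: "?T = c \<cdot>\<^sub>m 1\<^sub>m d"
    using schur_lemma rep_average_commute[OF irr_rep _ i k] by blast
  have "of_nat d * c = (if k = i then fact n else 0)"
    using mat_trace_rep_average[OF irr_rep i k] unfolding c mat_trace_def by simp
  then have "c = (if i = k then fact n / of_nat d else 0)"
    using irr_dim_pos by (auto simp: eq_divide_eq mult.commute)
  moreover have "(\<Sum>g\<in>perms n. \<rho> g $$ (i, i) * \<rho> (inv g) $$ (k, k)) = ?T $$ (i, k)"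
    using i k unfolding rep_average_def by simp
  ultimately show ?thesis
    using i k unfolding c by simp
qed

lemma sum_character_inv:
  "(\<Sum>g\<in>perms n. mat_trace (\<rho> g) * mat_trace (\<rho> (inv g))) = fact n"
proof -
  have "(\<Sum>g\<in>perms n. mat_trace (\<rho> g) * mat_trace (\<rho> (inv g)))
      = (\<Sum>g\<in>perms n. \<Sum>i<d. \<Sum>k<d. \<rho> g $$ (i, i) * \<rho> (inv g) $$ (k, k))"
  proof (intro sum.cong refl)
    fix g assume "g \<in> perms n"
    then have "\<rho> g \<in> carrier_mat d d" "\<rho> (inv g) \<in> carrier_mat d d"
      by (auto intro: rep_carrier[OF irr_rep] permutes_inv)
    then show "mat_trace (\<rho> g) * mat_trace (\<rho> (inv g))
        = (\<Sum>i<d. \<Sum>k<d. \<rho> g $$ (i, i) * \<rho> (inv g) $$ (k, k))"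
      by (simp add: mat_trace_def sum_product)
  qed
  also have "\<dots> = (\<Sum>i<d. \<Sum>k<d. \<Sum>g\<in>perms n. \<rho> g $$ (i, i) * \<rho> (inv g) $$ (k, k))"
    by (simp only: sum.swap[of _ "perms n"])
  also have "\<dots> = (\<Sum>i<d. fact n / of_nat d :: complex)"
    by (intro sum.cong) (simp_all add: schur_orthogonality)
  also have "\<dots> = fact n"
    using irr_dim_pos by simp
  finally show ?thesis .
qed

lemma sum_norm_character_sq: "(\<Sum>g\<in>perms n. (cmod (mat_trace (\<rho> g)))\<^sup>2) = fact n"
proof -
  have "complex_of_real (\<Sum>g\<in>perms n. (cmod (mat_trace (\<rho> g)))\<^sup>2)
      = (\<Sum>g\<in>perms n. mat_trace (\<rho> g) * mat_trace (\<rho> (inv g)))"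
    by (simp add: character_inv[OF irr_rep] complex_norm_square[symmetric])
  also have "\<dots> = complex_of_real (fact n)"
    unfolding sum_character_inv by simp
  finally show ?thesis
    by (simp only: of_real_eq_iff)
qed

end

section \<open>Products of transpositions\<close>

abbreviation moved :: "('a \<Rightarrow> 'a) \<Rightarrow> 'a set" where
  "moved \<pi> \<equiv> {x. \<pi> x \<noteq> x}"

definition transp_prod :: "('a \<times> 'a) list \<Rightarrow> 'a \<Rightarrow> 'a" where
  "transp_prod ts = foldr (\<lambda>(a, b) f. Transposition.transpose a b \<circ> f) ts id"

definition transps_on :: "'a set \<Rightarrow> ('a \<times> 'a) list \<Rightarrow> bool" where
  "transps_on S ts \<longleftrightarrow> (\<forall>(a, b) \<in> set ts. a \<in> S \<and> b \<in> S \<and> a \<noteq> b)"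

definition orbit_cover :: "('a \<Rightarrow> 'a) \<Rightarrow> 'a set \<Rightarrow> bool" where
  "orbit_cover \<pi> R \<longleftrightarrow> (\<forall>y. \<pi> y \<noteq> y \<longrightarrow> (\<exists>r\<in>R. \<exists>j. (\<pi> ^^ j) r = y))"

lemma transp_prod_Nil [simp]: "transp_prod [] = id"
  by (simp add: transp_prod_def)

lemma transp_prod_Cons [simp]:
  "transp_prod ((a, b) # ts) = Transposition.transpose a b \<circ> transp_prod ts"
  by (simp add: transp_prod_def)

lemma moved_transp_prod: "moved (transp_prod ts) \<subseteq> fst ` set ts \<union> snd ` set ts"
proof (induction ts)
  case (Cons p ts)
  obtain a b where p: "p = (a, b)" by (cases p)
  have "x = a \<or> x = b \<or> transp_prod ts x \<noteq> x" if "transp_prod (p # ts) x \<noteq> x" for x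
    using that unfolding p by (metis comp_apply transp_prod_Cons transpose_apply_other)
  then show ?case
    using Cons.IH unfolding p by fastforce
qed simp

lemma card_moved_transp_prod: "card (moved (transp_prod ts)) \<le> 2 * length ts"
proof -
  have "card (moved (transp_prod ts)) \<le> card (fst ` set ts \<union> snd ` set ts)"
    by (intro card_mono moved_transp_prod) auto
  also have "\<dots> \<le> card (fst ` set ts) + card (snd ` set ts)"
    by (rule card_Un_le)
  also have "\<dots> \<le> 2 * length ts"
    using card_image_le[of "set ts" fst] card_image_le[of "set ts" snd] card_length[of ts] by simp
  finally show ?thesis .
qed

lemma tmin_le:
  assumes "transps_on {..<n} ts" "transp_prod ts = \<pi>"
  shows "tmin n \<pi> \<le> length ts"
  unfolding tmin_def using assms unfolding transps_on_def transp_prod_def lessThan_iff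
  by (intro Least_le) blast

lemma tmin_attained:
  assumes "transps_on {..<n} ts" "transp_prod ts = \<pi>"
  obtains ts' where "transps_on {..<n} ts'" "transp_prod ts' = \<pi>" "length ts' = tmin n \<pi>"
proof -
  let ?P = "\<lambda>k. \<exists>ts :: (nat \<times> nat) list. length ts = k \<and>
       (\<forall>(a, b) \<in> set ts. a < n \<and> b < n \<and> a \<noteq> b) \<and>
       foldr (\<lambda>(a, b) f. Transposition.transpose a b \<circ> f) ts id = \<pi>"
  have "?P (length ts)"
    using assms unfolding transps_on_def transp_prod_def lessThan_iff by blast
  then have "?P (tmin n \<pi>)"
    unfolding tmin_def by (rule LeastI)
  then show ?thesis
    using that unfolding transps_on_def transp_prod_def lessThan_iff by blast
qed

lemma transpose_comp_cases:
  assumes "inj \<pi>"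
  shows "(Transposition.transpose x (\<pi> x) \<circ> \<pi>) z \<in> {z, \<pi> z, \<pi> (\<pi> z)}"
proof -
  consider "\<pi> z = x" | "z = x" | "\<pi> z \<noteq> x" "\<pi> z \<noteq> \<pi> x"
    using inj_eq[OF assms] by blast
  then show ?thesis
    by cases auto
qed

lemma funpow_orbit_of_steps:
  assumes "\<And>z. \<pi>' z \<in> {z, \<pi> z, \<pi> (\<pi> z)}"
  shows "\<exists>i. (\<pi>' ^^ j) r = (\<pi> ^^ i) r"
proof (induction j)
  case (Suc j)
  then obtain i where "(\<pi>' ^^ j) r = (\<pi> ^^ i) r" by blast
  then have "(\<pi>' ^^ Suc j) r \<in> {(\<pi> ^^ i) r, (\<pi> ^^ Suc i) r, (\<pi> ^^ Suc (Suc i)) r}"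
    using assms[of "(\<pi> ^^ i) r"] by simp
  then show ?case by blast
qed (metis funpow_0)

lemma moved_transpose_comp:
  assumes "inj \<pi>" "\<pi> x \<noteq> x"
  shows "moved (Transposition.transpose x (\<pi> x) \<circ> \<pi>)
    = (if \<pi> (\<pi> x) = x then moved \<pi> - {x, \<pi> x} else moved \<pi> - {x})"
proof -
  have "(Transposition.transpose x (\<pi> x) \<circ> \<pi>) z \<noteq> z \<longleftrightarrow>
      \<pi> z \<noteq> z \<and> z \<noteq> x \<and> \<not> (z = \<pi> x \<and> \<pi> (\<pi> x) = x)" for z
  proof -
    consider "\<pi> z = x" | "z = x" | "\<pi> z \<noteq> x" "\<pi> z \<noteq> \<pi> x"
      using inj_eq[OF assms(1)] by blast
    then show ?thesis
      by cases (use assms inj_eq[OF assms(1)] in auto)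
  qed
  then show ?thesis by auto
qed

lemma card_moved_transpose_comp:
  assumes inj: "inj \<pi>" and x: "\<pi> x \<noteq> x" and fin: "finite (moved \<pi>)"
  shows "card (moved (Transposition.transpose x (\<pi> x) \<circ> \<pi>)) + (if \<pi> (\<pi> x) = x then 2 else 1)
    = card (moved \<pi>)"
proof -
  have x1: "x \<in> moved \<pi>"
    using x by simp
  have x2: "\<pi> x \<in> moved \<pi> - {x}"
    using x inj_eq[OF inj, of "\<pi> x" x] by auto
  have "card (moved \<pi>) = Suc (card (moved \<pi> - {x}))"
    by (rule card.remove[OF fin x1])
  moreover have "card (moved \<pi> - {x}) = Suc (card (moved \<pi> - {x} - {\<pi> x}))"
    by (rule card.remove[OF finite_Diff[OF fin] x2])
  ultimately show ?thesis
    unfolding moved_transpose_comp[OF inj x] Diff_insert2[of "moved \<pi>" x "{\<pi> x}"] by simp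
qed

lemma orbit_cover_transpose_comp_reach:
  assumes "inj \<pi>" and "orbit_cover (Transposition.transpose x (\<pi> x) \<circ> \<pi>) R"
    and "(Transposition.transpose x (\<pi> x) \<circ> \<pi>) z \<noteq> z"
  shows "\<exists>r\<in>R. \<exists>i. (\<pi> ^^ i) r = z"
proof -
  obtain r j where r: "r \<in> R" and z: "((Transposition.transpose x (\<pi> x) \<circ> \<pi>) ^^ j) r = z"
    using assms(2,3) unfolding orbit_cover_def by blast
  have "(Transposition.transpose x (\<pi> x) \<circ> \<pi>) y \<in> {y, \<pi> y, \<pi> (\<pi> y)}" for y
    using transpose_comp_cases[OF assms(1)] .
  then obtain i where "((Transposition.transpose x (\<pi> x) \<circ> \<pi>) ^^ j) r = (\<pi> ^^ i) r"
    using funpow_orbit_of_steps[of "Transposition.transpose x (\<pi> x) \<circ> \<pi>" \<pi> j r] by blast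
  with z have "(\<pi> ^^ i) r = z"
    by simp
  with r show ?thesis
    by blast
qed

lemma orbit_cover_transpose_comp:
  assumes bij: "bij \<pi>" and x: "\<pi> x \<noteq> x"
    and cover: "orbit_cover (Transposition.transpose x (\<pi> x) \<circ> \<pi>) R"
  shows "orbit_cover \<pi> (if \<pi> (\<pi> x) = x then insert x R else R)"
  unfolding orbit_cover_def
proof (intro allI impI)
  let ?\<pi>' = "Transposition.transpose x (\<pi> x) \<circ> \<pi>"
  have inj: "inj \<pi>" using bij by (rule bij_is_inj)
  note reach = orbit_cover_transpose_comp_reach[OF inj cover]
  note moved' = moved_transpose_comp[OF inj x]
  fix z assume z: "\<pi> z \<noteq> z"
  show "\<exists>r\<in>(if \<pi> (\<pi> x) = x then insert x R else R). \<exists>j. (\<pi> ^^ j) r = z"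
  proof (cases "\<pi> (\<pi> x) = x")
    case True
    then consider "z = x" | "z = \<pi> x" | "?\<pi>' z \<noteq> z"
      using z moved' by (auto simp: set_eq_iff)
    then show ?thesis
    proof cases
      case 1 then show ?thesis using True by (intro bexI[of _ x] exI[of _ 0]) auto
    next
      case 2 then show ?thesis using True by (intro bexI[of _ x] exI[of _ 1]) auto
    next
      case 3 then show ?thesis using True reach by auto
    qed
  next
    case False
    obtain w where w: "\<pi> w = x" using bij by (metis bij_pointE)
    then have "w \<noteq> x" "\<pi> w \<noteq> w" using x by auto
    then have "?\<pi>' w \<noteq> w" and "z \<noteq> x \<Longrightarrow> ?\<pi>' z \<noteq> z"
      using False z moved' by (auto simp: set_eq_iff)
    then obtain r i where "r \<in> R" "(\<pi> ^^ i) r = w"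
      and "z \<noteq> x \<Longrightarrow> \<exists>r\<in>R. \<exists>i. (\<pi> ^^ i) r = z"
      using reach by blast
    moreover have "(\<pi> ^^ Suc i) r = x"
      using w calculation(2) by simp
    ultimately show ?thesis
      using False by (simp only: if_False) blast
  qed
qed

text \<open>Multiplying by the transposition (x, \<pi> x) fixes x and removes it from its cycle;
  when that cycle is a 2-cycle both of its points become fixed, and x is recorded in R.\<close>
lemma transposition_decomposition:
  assumes "\<pi> permutes S" "finite S"
  shows "\<exists>R L. R \<subseteq> moved \<pi> \<and> orbit_cover \<pi> R \<and> transps_on S L \<and> transp_prod L = \<pi> \<and>
    length L + card R \<le> card (moved \<pi>)"
  using assms(1)
proof (induction "card (moved \<pi>)" arbitrary: \<pi> rule: less_induct)
  case less
  have fin: "finite (moved \<pi>)"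
    using less.prems assms(2) by (auto intro: finite_subset simp: permutes_def)
  show ?case
  proof (cases "moved \<pi> = {}")
    case True
    then have "\<pi> = id" by auto
    then show ?thesis
      by (intro exI[of _ "{}"] exI[of _ "[]"]) (auto simp: orbit_cover_def transps_on_def)
  next
    case False
    then obtain x where x: "\<pi> x \<noteq> x" by auto
    let ?\<pi>' = "Transposition.transpose x (\<pi> x) \<circ> \<pi>"
    have inj: "inj \<pi>" and bij: "bij \<pi>"
      using less.prems by (auto simp: permutes_inj permutes_bij)
    have xS: "x \<in> S" "\<pi> x \<in> S"
      using less.prems x by (metis permutes_not_in, metis permutes_in_image permutes_not_in)
    have \<pi>': "?\<pi>' permutes S"
      using less.prems xS by (intro permutes_compose permutes_swap_id)
    note card' = card_moved_transpose_comp[OF inj x fin]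
    then have "card (moved ?\<pi>') < card (moved \<pi>)"
      by (cases "\<pi> (\<pi> x) = x") simp_all
    then obtain R L where R: "R \<subseteq> moved ?\<pi>'" "orbit_cover ?\<pi>' R"
      and L: "transps_on S L" "transp_prod L = ?\<pi>'" "length L + card R \<le> card (moved ?\<pi>')"
      using less.hyps[OF _ \<pi>'] by blast
    have R_moved: "R \<subseteq> moved \<pi> - {x}"
      using R(1) unfolding moved_transpose_comp[OF inj x] by (auto split: if_splits)
    then have "finite R" "x \<notin> R"
      using finite_subset fin by blast+
    let ?R = "if \<pi> (\<pi> x) = x then insert x R else R"
    have "transps_on S ((x, \<pi> x) # L)"
      using L(1) xS x unfolding transps_on_def by auto
    moreover have "transp_prod ((x, \<pi> x) # L) = \<pi>"
      using L(2) by (simp flip: comp_assoc)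
    moreover have "?R \<subseteq> moved \<pi>"
      using R_moved x by auto
    moreover have "orbit_cover \<pi> ?R"
      using orbit_cover_transpose_comp[OF bij x R(2)] .
    moreover have "length ((x, \<pi> x) # L) + card ?R \<le> card (moved \<pi>)"
      using L(3) card' \<open>finite R\<close> \<open>x \<notin> R\<close> by (cases "\<pi> (\<pi> x) = x") simp_all
    ultimately show ?thesis by blast
  qed
qed

lemma tmin_bounds:
  assumes "\<pi> permutes {..<n}"
  obtains R where "R \<subseteq> moved \<pi>" "orbit_cover \<pi> R"
    "tmin n \<pi> + card R \<le> card (moved \<pi>)" "card (moved \<pi>) \<le> 2 * tmin n \<pi>"
proof -
  obtain R L where R: "R \<subseteq> moved \<pi>" "orbit_cover \<pi> R"
    and L: "transps_on {..<n} L" "transp_prod L = \<pi>" "length L + card R \<le> card (moved \<pi>)"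
    using transposition_decomposition[OF assms finite_lessThan] by blast
  obtain L' where "transp_prod L' = \<pi>" "length L' = tmin n \<pi>"
    using tmin_attained[OF L(1,2)] by blast
  then have "card (moved \<pi>) \<le> 2 * tmin n \<pi>"
    using card_moved_transp_prod[of L'] by simp
  moreover have "tmin n \<pi> + card R \<le> card (moved \<pi>)"
    using tmin_le[OF L(1,2)] L(3) by simp
  ultimately show ?thesis
    using that R by blast
qed

section \<open>Centralisers\<close>

definition centralizer :: "'a set \<Rightarrow> ('a \<Rightarrow> 'a) \<Rightarrow> ('a \<Rightarrow> 'a) set" where
  "centralizer S \<pi> = {\<sigma>. \<sigma> permutes S \<and> \<sigma> \<circ> \<pi> = \<pi> \<circ> \<sigma>}"

lemma sum_comp_le_card_fibres:
  fixes h :: "'b \<Rightarrow> real"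
  assumes A: "finite A" and f: "f ` A \<subseteq> B" and B: "finite B"
    and fibres: "\<And>y. y \<in> B \<Longrightarrow> card {x \<in> A. f x = y} \<le> c"
    and h: "\<And>y. y \<in> B \<Longrightarrow> h y \<ge> 0"
  shows "(\<Sum>x\<in>A. h (f x)) \<le> c * (\<Sum>y\<in>B. h y)"
proof -
  have "(\<Sum>x\<in>A. h (f x)) = (\<Sum>y\<in>B. \<Sum>x\<in>{x \<in> A. f x = y}. h (f x))"
    by (rule sum.group[OF A B f, symmetric])
  also have "\<dots> = (\<Sum>y\<in>B. card {x \<in> A. f x = y} * h y)"
    by (intro sum.cong refl) simp
  also have "\<dots> \<le> (\<Sum>y\<in>B. c * h y)"
    using fibres h by (intro sum_mono mult_right_mono) auto
  finally show ?thesis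
    by (simp add: sum_distrib_left)
qed

lemma card_conj_fibre_le_card_centralizer:
  assumes S: "finite S" and \<pi>: "\<pi> permutes S"
  shows "card {\<sigma>. \<sigma> permutes S \<and> \<sigma> \<circ> \<pi> \<circ> inv \<sigma> = \<tau>} \<le> card (centralizer S \<pi>)"
proof (cases "\<exists>s. s permutes S \<and> s \<circ> \<pi> \<circ> inv s = \<tau>")
  case True
  then obtain s where s: "s permutes S" and \<tau>: "\<tau> = s \<circ> \<pi> \<circ> inv s" by blast
  have cancel: "inv s \<circ> (s \<circ> f) = f" "s \<circ> (inv s \<circ> f) = f" for f :: "'a \<Rightarrow> 'a"
    using permutes_inv_o[OF s] by (simp_all flip: comp_assoc)
  show ?thesis
  proof (rule card_inj_on_le)
    show "inj_on ((\<circ>) (inv s)) {\<sigma>. \<sigma> permutes S \<and> \<sigma> \<circ> \<pi> \<circ> inv \<sigma> = \<tau>}"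
      by (intro inj_onI) (metis cancel(2))
    show "(\<circ>) (inv s) ` {\<sigma>. \<sigma> permutes S \<and> \<sigma> \<circ> \<pi> \<circ> inv \<sigma> = \<tau>} \<subseteq> centralizer S \<pi>"
    proof (rule image_subsetI)
      fix \<sigma> assume "\<sigma> \<in> {\<sigma>. \<sigma> permutes S \<and> \<sigma> \<circ> \<pi> \<circ> inv \<sigma> = \<tau>}"
      then have \<sigma>: "\<sigma> permutes S" and conj: "\<sigma> \<circ> \<pi> \<circ> inv \<sigma> = \<tau>" by auto
      have "inv s \<circ> \<sigma> \<circ> \<pi> = inv s \<circ> (\<sigma> \<circ> \<pi> \<circ> inv \<sigma>) \<circ> \<sigma>"
        using permutes_inv_o(2)[OF \<sigma>] by (simp add: comp_assoc)
      also have "\<dots> = \<pi> \<circ> (inv s \<circ> \<sigma>)"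
        unfolding conj \<tau> by (simp add: comp_assoc cancel)
      finally have "inv s \<circ> \<sigma> \<circ> \<pi> = \<pi> \<circ> (inv s \<circ> \<sigma>)" .
      moreover have "inv s \<circ> \<sigma> permutes S"
        using s \<sigma> by (intro permutes_compose permutes_inv)
      ultimately show "inv s \<circ> \<sigma> \<in> centralizer S \<pi>"
        unfolding centralizer_def by blast
    qed
    show "finite (centralizer S \<pi>)"
      using S unfolding centralizer_def by (auto intro: finite_subset[OF _ finite_permutations])
  qed
next
  case False
  then have "{\<sigma>. \<sigma> permutes S \<and> \<sigma> \<circ> \<pi> \<circ> inv \<sigma> = \<tau>} = {}" by blast
  then show ?thesis by (simp only: card.empty zero_le)
qed

lemma commute_funpow_apply:
  assumes "\<sigma> \<circ> \<pi> = \<pi> \<circ> \<sigma>"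
  shows "\<sigma> ((\<pi> ^^ j) z) = (\<pi> ^^ j) (\<sigma> z)"
proof (induction j)
  case (Suc j)
  have "\<sigma> (\<pi> ((\<pi> ^^ j) z)) = \<pi> (\<sigma> ((\<pi> ^^ j) z))"
    using fun_cong[OF assms, of "(\<pi> ^^ j) z"] by simp
  then show ?case
    using Suc.IH by simp
qed simp

lemma centralizer_eqI:
  assumes \<sigma>: "\<sigma> \<in> centralizer S \<pi>" and \<sigma>': "\<sigma>' \<in> centralizer S \<pi>"
    and cover: "orbit_cover \<pi> R" and on_R: "\<And>r. r \<in> R \<Longrightarrow> \<sigma> r = \<sigma>' r"
    and on_fixed: "\<And>z. z \<in> S \<Longrightarrow> \<pi> z = z \<Longrightarrow> \<sigma> z = \<sigma>' z"
  shows "\<sigma> = \<sigma>'"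
proof
  have perm: "\<sigma> permutes S" "\<sigma>' permutes S"
    and comm: "\<sigma> \<circ> \<pi> = \<pi> \<circ> \<sigma>" "\<sigma>' \<circ> \<pi> = \<pi> \<circ> \<sigma>'"
    using \<sigma> \<sigma>' unfolding centralizer_def by auto
  fix z
  consider "z \<notin> S" | "z \<in> S" "\<pi> z = z" | "\<pi> z \<noteq> z" by blast
  then show "\<sigma> z = \<sigma>' z"
  proof cases
    case 1
    then show ?thesis
      using perm by (simp add: permutes_not_in)
  next
    case 2
    then show ?thesis by (rule on_fixed)
  next
    case 3
    then obtain r j where r: "r \<in> R" and z: "z = (\<pi> ^^ j) r"
      using cover unfolding orbit_cover_def by metis
    then show ?thesis
      using on_R[OF r]
      by (simp add: commute_funpow_apply[OF comm(1)] commute_funpow_apply[OF comm(2)])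
  qed
qed

lemma centralizer_permutes_fixed:
  assumes S: "finite S" and \<sigma>: "\<sigma> \<in> centralizer S \<pi>"
  shows "(\<lambda>z. if z \<in> S - moved \<pi> then \<sigma> z else z) permutes S - moved \<pi>"
proof -
  let ?F = "S - moved \<pi>"
  have perm: "\<sigma> permutes S" and comm: "\<And>z. \<sigma> (\<pi> z) = \<pi> (\<sigma> z)"
    using \<sigma> unfolding centralizer_def by (auto simp: fun_eq_iff)
  have "\<sigma> z \<in> ?F" if "z \<in> ?F" for z
    using that comm[of z] permutes_in_image[OF perm] by auto
  then have "\<sigma> ` ?F = ?F"
    using S permutes_inj_on[OF perm] by (intro endo_inj_surj) auto
  then have "bij_betw \<sigma> ?F ?F"
    using permutes_inj_on[OF perm] by (simp add: bij_betw_def)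
  then have "bij_betw (\<lambda>z. if z \<in> ?F then \<sigma> z else z) ?F ?F"
    using bij_betw_cong[of ?F "\<lambda>z. if z \<in> ?F then \<sigma> z else z" \<sigma> ?F] by simp
  then show ?thesis
    by (rule bij_imp_permutes) auto
qed

lemma centralizer_moved:
  assumes \<sigma>: "\<sigma> \<in> centralizer S \<pi>" and r: "\<pi> r \<noteq> r"
  shows "\<pi> (\<sigma> r) \<noteq> \<sigma> r"
proof -
  have inj: "inj \<sigma>" and comm: "\<sigma> (\<pi> r) = \<pi> (\<sigma> r)"
    using \<sigma> unfolding centralizer_def by (auto simp: permutes_inj fun_eq_iff)
  have "\<sigma> (\<pi> r) \<noteq> \<sigma> r"
    using r inj by (simp add: inj_eq)
  then show ?thesis
    by (simp add: comm)
qed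

text \<open>A permutation commuting with \<pi> permutes the fixed points of \<pi> and, by
  centralizer_eqI, is determined by this and by its values on R, which lie in moved \<pi>.\<close>
lemma card_centralizer_le:
  assumes S: "finite S" and \<pi>: "\<pi> permutes S"
    and R: "R \<subseteq> moved \<pi>" and cover: "orbit_cover \<pi> R"
  shows "card (centralizer S \<pi>) \<le> fact (card S - card (moved \<pi>)) * card (moved \<pi>) ^ card R"
proof -
  let ?F = "S - moved \<pi>"
  have moved_S: "moved \<pi> \<subseteq> S"
    using \<pi> unfolding permutes_def by blast
  then have fin: "finite (moved \<pi>)" "finite R"
    using S R by (auto intro: finite_subset)
  define \<Phi> where "\<Phi> \<sigma> = ((\<lambda>z. if z \<in> ?F then \<sigma> z else z), restrict \<sigma> R)" for \<sigma> :: "'a \<Rightarrow> 'a"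
  have "inj_on \<Phi> (centralizer S \<pi>)"
  proof (rule inj_onI)
    fix \<sigma> \<sigma>'
    assume \<sigma>: "\<sigma> \<in> centralizer S \<pi>" and \<sigma>': "\<sigma>' \<in> centralizer S \<pi>" and "\<Phi> \<sigma> = \<Phi> \<sigma>'"
    then have on_F: "(\<lambda>z. if z \<in> ?F then \<sigma> z else z) = (\<lambda>z. if z \<in> ?F then \<sigma>' z else z)"
      and on_R: "restrict \<sigma> R = restrict \<sigma>' R"
      unfolding \<Phi>_def by simp_all
    show "\<sigma> = \<sigma>'"
    proof (rule centralizer_eqI[OF \<sigma> \<sigma>' cover])
      show "\<sigma> r = \<sigma>' r" if "r \<in> R" for r
        using fun_cong[OF on_R, of r] that by simp
      show "\<sigma> z = \<sigma>' z" if "z \<in> S" "\<pi> z = z" for z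
        using fun_cong[OF on_F, of z] that by simp
    qed
  qed
  moreover have "\<Phi> ` centralizer S \<pi> \<subseteq> {\<tau>. \<tau> permutes ?F} \<times> (R \<rightarrow>\<^sub>E moved \<pi>)"
  proof (rule image_subsetI)
    fix \<sigma> assume \<sigma>: "\<sigma> \<in> centralizer S \<pi>"
    then have "\<sigma> r \<in> moved \<pi>" if "r \<in> R" for r
      using centralizer_moved[OF \<sigma>] R that by auto
    then show "\<Phi> \<sigma> \<in> {\<tau>. \<tau> permutes ?F} \<times> (R \<rightarrow>\<^sub>E moved \<pi>)"
      unfolding \<Phi>_def using centralizer_permutes_fixed[OF S \<sigma>] by auto
  qed
  moreover have "finite ({\<tau>. \<tau> permutes ?F} \<times> (R \<rightarrow>\<^sub>E moved \<pi>))"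
    using S fin by (intro finite_cartesian_product finite_permutations finite_PiE) auto
  ultimately have "card (centralizer S \<pi>) \<le> card ({\<tau>. \<tau> permutes ?F} \<times> (R \<rightarrow>\<^sub>E moved \<pi>))"
    by (rule card_inj_on_le)
  also have "\<dots> = fact (card S - card (moved \<pi>)) * card (moved \<pi>) ^ card R"
    using S fin moved_S by (simp add: card_cartesian_product card_permutations card_PiE card_Diff_subset)
  finally show ?thesis .
qed

lemma norm_character_sq_le_card_centralizer:
  assumes irr: "irreducible_rep n d \<rho>" and \<pi>: "\<pi> permutes {..<n}"
  shows "(cmod (mat_trace (\<rho> \<pi>)))\<^sup>2 \<le> card (centralizer {..<n} \<pi>)"
proof -
  define h where "h g = (cmod (mat_trace (\<rho> g)))\<^sup>2" for g
  have conj: "\<sigma> \<circ> \<pi> \<circ> inv \<sigma> permutes {..<n}" if "\<sigma> permutes {..<n}" for \<sigma>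
    using that \<pi> by (intro permutes_compose permutes_inv)
  have "fact n * h \<pi> = (\<Sum>\<sigma>\<in>perms n. h \<pi>)"
    by (simp add: card_permutations)
  also have "\<dots> = (\<Sum>\<sigma>\<in>perms n. h (\<sigma> \<circ> \<pi> \<circ> inv \<sigma>))"
    unfolding h_def using \<pi> by (intro sum.cong refl) (simp add: character_conj[OF irr_rep[OF irr]])
  also have "\<dots> \<le> card (centralizer {..<n} \<pi>) * (\<Sum>g\<in>perms n. h g)"
  proof (rule sum_comp_le_card_fibres)
    show "(\<lambda>\<sigma>. \<sigma> \<circ> \<pi> \<circ> inv \<sigma>) ` perms n \<subseteq> perms n"
      using conj by blast
    show "card {x \<in> perms n. x \<circ> \<pi> \<circ> inv x = \<tau>} \<le> card (centralizer {..<n} \<pi>)" for \<tau>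
      using card_conj_fibre_le_card_centralizer[OF finite_lessThan \<pi>, of \<tau>]
      by (simp only: mem_Collect_eq)
  qed (simp_all add: h_def finite_permutations)
  also have "(\<Sum>g\<in>perms n. h g) = fact n"
    unfolding h_def by (rule sum_norm_character_sq[OF irr])
  finally show ?thesis
    unfolding h_def by (simp add: mult.commute)
qed

section \<open>The character estimate\<close>

lemma power_le_exp_mult_fact:
  fixes x :: real
  assumes "0 \<le> x"
  shows "x ^ n \<le> exp x * fact n"
proof -
  have "x ^ n /\<^sub>R fact n \<le> (\<Sum>k. x ^ k /\<^sub>R fact k)"
    using sum_le_suminf[OF summable_exp_generic[of x], of "{n}"] assms by simp
  then show ?thesis
    by (simp add: exp_def field_simps)
qed

lemma fact_mult_power_le_fact_add: "fact k * k ^ m \<le> (fact (k + m) :: nat)"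
proof (induction m)
  case (Suc m)
  have "fact k * k ^ Suc m = (fact k * k ^ m) * k" by simp
  also have "\<dots> \<le> fact (k + m) * Suc (k + m)" by (intro mult_mono Suc) auto
  also have "\<dots> = fact (k + Suc m)" by (simp add: mult.commute)
  finally show ?case .
qed simp

text \<open>For m \<le> n/2 use n \<le> 2(n - m); otherwise use n^n \<le> e^n n! and n \<le> 2m.\<close>
lemma power_mult_fact_diff_le:
  assumes "m \<le> n"
  shows "real n ^ m * fact (n - m) \<le> exp (2 * real m) * fact n"
proof (cases "n \<le> 2 * m")
  case True
  have "(fact (n - m) :: real) \<le> real (n - m) ^ (n - m)"
    using fact_le_power[of "n - m"] by simp
  also have "\<dots> \<le> real n ^ (n - m)"
    by (intro power_mono) auto
  finally have "real n ^ m * fact (n - m) \<le> real n ^ m * real n ^ (n - m)"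
    by (intro mult_left_mono) auto
  also have "\<dots> = real n ^ n"
    using assms by (simp flip: power_add)
  also have "\<dots> \<le> exp (real n) * fact n"
    by (rule power_le_exp_mult_fact) simp
  also have "\<dots> \<le> exp (2 * real m) * fact n"
    using True by (intro mult_right_mono) auto
  finally show ?thesis .
next
  case False
  define k where "k = n - m"
  have n: "n = k + m" and "real n \<le> 2 * real k"
    using assms False unfolding k_def by auto
  then have "real n ^ m \<le> 2 ^ m * real k ^ m"
    by (metis power_mono power_mult_distrib of_nat_0_le_iff)
  then have "real n ^ m * fact (n - m) \<le> 2 ^ m * (real k ^ m * fact k)"
    unfolding k_def[symmetric] by (simp add: mult_right_mono mult.assoc)
  also have "real k ^ m * fact k \<le> fact n"
    unfolding n using fact_mult_power_le_fact_add[of k m]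
    by (metis mult.commute of_nat_fact of_nat_le_iff of_nat_mult of_nat_power)
  also have "(2::real) ^ m \<le> exp (2 * real m)"
  proof -
    have "(2::real) ^ m \<le> exp 1 ^ m"
      using exp_ge_add_one_self[of 1] by (intro power_mono) auto
    also have "\<dots> \<le> exp (2 * real m)"
      by (simp flip: exp_of_nat_mult)
    finally show ?thesis .
  qed
  finally show ?thesis
    by (simp add: mult_right_mono)
qed

lemma card_centralizer_tmin:
  assumes \<pi>: "\<pi> permutes {..<n}"
  shows "real n ^ tmin n \<pi> * card (centralizer {..<n} \<pi>) \<le> exp (4 * real (tmin n \<pi>)) * fact n"
proof -
  let ?t = "tmin n \<pi>" and ?m = "card (moved \<pi>)"
  obtain R where R: "R \<subseteq> moved \<pi>" "orbit_cover \<pi> R" "?t + card R \<le> ?m" "?m \<le> 2 * ?t"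
    using tmin_bounds[OF \<pi>] by blast
  have "moved \<pi> \<subseteq> {..<n}"
    using \<pi> unfolding permutes_def by auto
  then have m: "?m \<le> n"
    using card_mono[OF finite_lessThan] by fastforce
  have "card (centralizer {..<n} \<pi>) \<le> fact (n - ?m) * ?m ^ card R"
    using card_centralizer_le[OF finite_lessThan \<pi> R(1,2)] by simp
  then have "real (card (centralizer {..<n} \<pi>)) \<le> real (fact (n - ?m) * ?m ^ card R)"
    by (simp only: of_nat_le_iff)
  also have "\<dots> = fact (n - ?m) * real ?m ^ card R"
    by simp
  also have "\<dots> \<le> fact (n - ?m) * real n ^ card R"
    using m by (intro mult_left_mono power_mono) auto
  finally have "real n ^ ?t * card (centralizer {..<n} \<pi>)
      \<le> real n ^ ?t * (fact (n - ?m) * real n ^ card R)"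
    by (rule mult_left_mono) simp
  also have "\<dots> = real n ^ (?t + card R) * fact (n - ?m)"
    by (simp add: power_add mult.commute mult.left_commute)
  also have "\<dots> \<le> real n ^ ?m * fact (n - ?m)"
  proof (cases "n = 0")
    case False
    then show ?thesis
      using R(3) by (intro mult_right_mono power_increasing) auto
  qed (use R(3) m in simp)
  also have "\<dots> \<le> exp (2 * real ?m) * fact n"
    using m by (rule power_mult_fact_diff_le)
  also have "\<dots> \<le> exp (4 * real ?t) * fact n"
    using R(4) by (intro mult_right_mono) auto
  finally show ?thesis .
qed

lemma fact_le_of_big:
  assumes "big n d" and t: "sqrt (real n) * ln (real n) < t"
  shows "fact n \<le> exp (2 * t) * (real d)\<^sup>2"
proof -
  let ?s = "sqrt (real n) * ln (real n)"
  have "(exp (- ?s) * sqrt (fact n))\<^sup>2 < (real d)\<^sup>2"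
    using assms(1) unfolding big_def by (intro power_strict_mono) auto
  then have "exp (- 2 * ?s) * fact n < (real d)\<^sup>2"
    by (simp add: power_mult_distrib exp_double[symmetric])
  then have "fact n < exp (2 * ?s) * (real d)\<^sup>2"
    by (simp add: exp_minus field_simps)
  also have "\<dots> \<le> exp (2 * t) * (real d)\<^sup>2"
    using t by (intro mult_right_mono) auto
  finally show ?thesis by simp
qed

lemma norm_character_ratio_le:
  assumes irr: "irreducible_rep n d \<rho>" and "big n d" and \<pi>: "\<pi> permutes {..<n}"
    and n: "0 < n" and t: "sqrt (real n) * ln (real n) < real (tmin n \<pi>)"
  shows "cmod (mat_trace (\<rho> \<pi>) / of_nat d)
    \<le> exp 3 ^ tmin n \<pi> * real n powr (- real (tmin n \<pi>) / 2)"
proof -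
  let ?t = "tmin n \<pi>" and ?\<chi> = "cmod (mat_trace (\<rho> \<pi>))"
  have d: "0 < d"
    using irr unfolding irreducible_rep_def by simp
  have "real n ^ ?t * ?\<chi>\<^sup>2 \<le> real n ^ ?t * card (centralizer {..<n} \<pi>)"
    using norm_character_sq_le_card_centralizer[OF irr \<pi>] by (rule mult_left_mono) simp
  also have "\<dots> \<le> exp (4 * real ?t) * fact n"
    using \<pi> by (rule card_centralizer_tmin)
  also have "\<dots> \<le> exp (4 * real ?t) * (exp (2 * real ?t) * (real d)\<^sup>2)"
    using fact_le_of_big[OF assms(2) t] by (rule mult_left_mono) simp
  also have "\<dots> = exp (6 * real ?t) * (real d)\<^sup>2"
    by (simp add: mult.assoc flip: exp_add)
  finally have "(?\<chi> / real d)\<^sup>2 \<le> exp (6 * real ?t) / real n ^ ?t"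
    using d n by (simp add: field_simps)
  also have "\<dots> = (exp 3 ^ ?t * real n powr (- real ?t / 2))\<^sup>2"
  proof -
    have "(real n powr (- real ?t / 2))\<^sup>2 = real n powr (- real ?t)"
      using n by (subst powr_power) auto
    also have "\<dots> = 1 / real n ^ ?t"
      using n by (simp add: powr_minus powr_realpow divide_inverse)
    finally have "(real n powr (- real ?t / 2))\<^sup>2 = 1 / real n ^ ?t" .
    moreover have "(exp 3 ^ ?t)\<^sup>2 = exp (6 * real ?t)"
      by (simp flip: exp_of_nat_mult power_mult)
    ultimately show ?thesis
      by (simp add: power_mult_distrib)
  qed
  finally show ?thesis
    by (auto simp: norm_divide intro: power2_le_imp_le)
qed

theorem lemma7:
  shows "\<exists>A::real. \<exists>N::nat. \<forall>n\<ge>N. \<forall>d \<rho> \<pi>.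
     irreducible_rep n d \<rho> \<longrightarrow> big n d \<longrightarrow> \<pi> permutes {..<n} \<longrightarrow>
     real (tmin n \<pi>) > sqrt (real n) * ln (real n) \<longrightarrow>
     cmod (mat_trace (\<rho> \<pi>) / of_nat d) \<le> A ^ tmin n \<pi> * real n powr (- real (tmin n \<pi>) / 2)"
  by (intro exI[of _ "exp 3"] exI[of _ 1] allI impI norm_character_ratio_le) auto

end
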